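(* Let $p,q\in\mathbb N$ and $\bm P\in\{0,1\}^{p\times q}$ be such that every row and every column of $\bm P$ contains at most one entry equal to $1$. Then $\textsc{FindCounterpart}(\bm P)$ equals the zero vector $\bm 0\in\mathbb R^p$ if $\bm P$ is the zero matrix, and otherwise equals the leftmost column of $\bm P$ that contains an entry $1$.
   Context: $\textsc{FindCounterpart}(\bm P)$ for $\bm P\in\mathbb R^{p\times q}$ is computed as follows: let $\bm c\in\mathbb R^q$ with $c_j=\sum_{i=1}^pP_{ij}$ (column sums); replace $\bm c$ by its cumulative sum, $c_j\leftarrow\sum_{l=1}^jc_l$; apply elementwise the triangle window $\mathrm{tw}(x)=0$ if $x\le0$, $x$ if $0<x\le1$, $2-x$ if $1<x\le2$, $0$ if $x>2$; return the column vector $\bm P\bm c^\top\in\mathbb R^p$. *)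

theory Defs
  imports Complex_Main "Jordan_Normal_Form.Matrix"
begin

definition tw :: "real \<Rightarrow> real" where
  "tw x = (if x \<le> 0 then 0 else if x \<le> 1 then x else if x \<le> 2 then 2 - x else 0)"

definition find_counterpart :: "real mat \<Rightarrow> real vec" where
  "find_counterpart P =
     P *\<^sub>v vec (dim_col P)
       (\<lambda>j. tw (\<Sum>l\<le>j. \<Sum>i<dim_row P. P $$ (i, l)))"

end

theory Submission
  imports Defs
begin

text \<open>Each nonzero column of P is a unit vector, so the column sums are 0 or 1 and
  the cumulative sum at column j counts the nonzero columns up to j. The triangle window
  sends this count to 1 at the first nonzero column and to 0 at every later one, where
  it is at least 2; its value at zero columns does not matter, since they contribute
  nothing to the product.\<close>

lemma tw_one [simp]: "tw 1 = 1"
  by (simp add: tw_def)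

lemma tw_eq_0_if_ge_2: "x \<ge> 2 \<Longrightarrow> tw x = 0"
  by (simp add: tw_def)

lemma sum_zero_one_card_le_1:
  fixes f :: "'a \<Rightarrow> 'b::semiring_1"
  assumes "finite A" and "\<forall>x\<in>A. f x \<in> {0, 1}" and "card {x\<in>A. f x = 1} \<le> 1"
  shows "sum f A = (if \<exists>x\<in>A. f x = 1 then 1 else 0)"
proof -
  have "sum f A = (\<Sum>x\<in>A. of_bool (f x = 1))"
    using assms(2) by (intro sum.cong) auto
  also have "\<dots> = of_nat (card {x\<in>A. f x = 1})"
    using \<open>finite A\<close> by (simp add: Int_def)
  also have "card {x\<in>A. f x = 1} = (if \<exists>x\<in>A. f x = 1 then 1 else 0)"
    using assms(3) \<open>finite A\<close> by (auto simp: le_Suc_eq card_eq_0_iff)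
  finally show ?thesis
    by simp
qed

lemma tw_cumulative_sum_zero_one:
  fixes s :: "nat \<Rightarrow> real"
  assumes "\<forall>l\<le>j. s l \<in> {0, 1}" and "s j = 1"
  shows "tw (\<Sum>l\<le>j. s l) = (if \<forall>l<j. s l = 0 then 1 else 0)"
proof (cases "\<forall>l<j. s l = 0")
  case True
  then have "(\<Sum>l\<le>j. s l) = s j"
    by (simp add: lessThan_Suc_atMost[symmetric])
  with True \<open>s j = 1\<close> show ?thesis
    by simp
next
  case False
  then obtain l where "l < j" "s l \<noteq> 0"
    by blast
  with assms(1) have "s l = 1"
    using less_imp_le by blast
  with \<open>l < j\<close> \<open>s j = 1\<close> have "2 = (\<Sum>l\<in>{l, j}. s l)"
    by simp
  also have "\<dots> \<le> (\<Sum>l\<le>j. s l)"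
    using \<open>l < j\<close> assms(1) by (intro sum_mono2) auto
  finally show ?thesis
    using False by (simp add: tw_eq_0_if_ge_2)
qed

lemma mult_mat_vec_eq_col:
  assumes "P \<in> carrier_mat p q" and "j0 < q" and "dim_vec c = q"
    and "\<And>i j. i < p \<Longrightarrow> j < q \<Longrightarrow> P $$ (i, j) * c $ j = (if j = j0 then P $$ (i, j) else 0)"
  shows "P *\<^sub>v c = col P j0"
proof (rule eq_vecI)
  fix i
  assume "i < dim_vec (col P j0)"
  then have "i < p"
    using assms(1) by simp
  then have "(P *\<^sub>v c) $ i = (\<Sum>j<q. if j = j0 then P $$ (i, j) else 0)"
    using assms by (auto simp: scalar_prod_def atLeast0LessThan intro!: sum.cong)
  then show "(P *\<^sub>v c) $ i = col P j0 $ i"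
    using \<open>i < p\<close> assms(1,2) by simp
qed (use assms(1) in simp)

lemma ex_entry_one_if_nonzero:
  fixes P :: "'a::zero_neq_one mat"
  assumes "P \<in> carrier_mat p q" and "\<forall>i<p. \<forall>j<q. P $$ (i, j) \<in> {0, 1}"
    and "P \<noteq> 0\<^sub>m p q"
  shows "\<exists>j<q. \<exists>i<p. P $$ (i, j) = 1"
proof (rule ccontr)
  assume "\<not> (\<exists>j<q. \<exists>i<p. P $$ (i, j) = 1)"
  with assms(1,2) have "P = 0\<^sub>m p q"
    by (intro eq_matI) auto
  with assms(3) show False
    by contradiction
qed

context
  fixes p q :: nat and P :: "real mat"
  assumes zero_one: "\<forall>i<p. \<forall>j<q. P $$ (i, j) \<in> {0, 1}"
    and col_card: "\<forall>j<q. card {i. i < p \<and> P $$ (i, j) = 1} \<le> 1"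
begin

lemma col_sum_zero_one:
  assumes "l < q"
  shows "(\<Sum>i<p. P $$ (i, l)) = (if \<exists>i<p. P $$ (i, l) = 1 then 1 else 0)"
  using sum_zero_one_card_le_1[of "{..<p}" "\<lambda>i. P $$ (i, l)"] zero_one col_card assms
  by simp

lemma tw_cumulative_col_sum:
  assumes "j < q" and "\<exists>i<p. P $$ (i, j) = 1"
  shows "tw (\<Sum>l\<le>j. \<Sum>i<p. P $$ (i, l)) =
           (if j = (LEAST j. j < q \<and> (\<exists>i<p. P $$ (i, j) = 1)) then 1 else 0)"
proof -
  let ?nonzero = "\<lambda>j. j < q \<and> (\<exists>i<p. P $$ (i, j) = 1)"
  have "tw (\<Sum>l\<le>j. \<Sum>i<p. P $$ (i, l)) = (if \<forall>l<j. (\<Sum>i<p. P $$ (i, l)) = 0 then 1 else 0)"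
    using assms col_sum_zero_one by (intro tw_cumulative_sum_zero_one) simp_all
  also have "(\<forall>l<j. (\<Sum>i<p. P $$ (i, l)) = 0) \<longleftrightarrow> (\<forall>l<j. \<not> ?nonzero l)"
    using assms(1) col_sum_zero_one by auto
  also have "\<dots> \<longleftrightarrow> j = (LEAST j. ?nonzero j)"
  proof
    assume "\<forall>l<j. \<not> ?nonzero l"
    with assms show "j = (LEAST j. ?nonzero j)"
      by (intro Least_equality[symmetric]) (auto simp: not_less[symmetric])
  next
    assume "j = (LEAST j. ?nonzero j)"
    then show "\<forall>l<j. \<not> ?nonzero l"
      using not_less_Least by blast
  qed
  finally show ?thesis .
qed

lemma entry_mult_tw_cumulative_col_sum:
  assumes "i < p" and "j < q"
  shows "P $$ (i, j) * tw (\<Sum>l\<le>j. \<Sum>i<p. P $$ (i, l)) =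
           (if j = (LEAST j. j < q \<and> (\<exists>i<p. P $$ (i, j) = 1)) then P $$ (i, j) else 0)"
proof (cases "P $$ (i, j) = 1")
  case True
  with assms(1) have "\<exists>i<p. P $$ (i, j) = 1"
    by blast
  with True assms(2) show ?thesis
    using tw_cumulative_col_sum[of j] by auto
next
  case False
  with assms zero_one show ?thesis
    by auto
qed

end

theorem proposition7:
  fixes p q :: nat and P :: "real mat"
  assumes "P \<in> carrier_mat p q"
    and "\<forall>i<p. \<forall>j<q. P $$ (i, j) \<in> {0, 1}"
    and "\<forall>i<p. card {j. j < q \<and> P $$ (i, j) = 1} \<le> 1"
    and "\<forall>j<q. card {i. i < p \<and> P $$ (i, j) = 1} \<le> 1"
  shows "find_counterpart P =
           (if P = 0\<^sub>m p q then 0\<^sub>v p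
            else col P (LEAST j. j < q \<and> (\<exists>i<p. P $$ (i, j) = 1)))"
proof -
  define c where "c = vec q (\<lambda>j. tw (\<Sum>l\<le>j. \<Sum>i<p. P $$ (i, l)))"
  have "find_counterpart P = P *\<^sub>v c"
    using assms(1) by (simp add: find_counterpart_def c_def)
  moreover have "P *\<^sub>v c = col P (LEAST j. j < q \<and> (\<exists>i<p. P $$ (i, j) = 1))"
    if "P \<noteq> 0\<^sub>m p q"
  proof (rule mult_mat_vec_eq_col[OF assms(1)])
    show "(LEAST j. j < q \<and> (\<exists>i<p. P $$ (i, j) = 1)) < q"
      using ex_entry_one_if_nonzero[OF assms(1,2) that] by (rule LeastI2_ex) simp
    show "P $$ (i, j) * c $ j =
            (if j = (LEAST j. j < q \<and> (\<exists>i<p. P $$ (i, j) = 1)) then P $$ (i, j) else 0)"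
      if "i < p" and "j < q" for i j
      using entry_mult_tw_cumulative_col_sum[OF assms(2,4) that] \<open>j < q\<close> by (simp add: c_def)
  qed (simp add: c_def)
  moreover have "0\<^sub>m p q *\<^sub>v c = 0\<^sub>v p"
    by (intro eq_vecI) (simp_all add: scalar_prod_def c_def)
  ultimately show ?thesis
    by (cases "P = 0\<^sub>m p q") simp_all
qed

end
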